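(* Let $\alpha,\beta\in(0,\pi/2)$ and consider the system on $S^2$ described in the context. There is no abnormal extremal pair $(x,\lambda)$ with $x(0)=N=(0,0,1)$ whose trajectory is bang-bang.
   Context: The system is $\dot x=Fx+u_1G_1x+u_2G_2x$ on the unit sphere $S^2\subset\mathbb R^3$, measurable controls $|u_i|\le1$, with $F=\cos\alpha\begin{pmatrix}0&-1&0\\1&0&0\\0&0&0\end{pmatrix}$, $G_1=\sin\alpha\sin\beta\begin{pmatrix}0&0&0\\0&0&-1\\0&1&0\end{pmatrix}$, $G_2=\sin\alpha\cos\beta\begin{pmatrix}0&0&-1\\0&0&0\\1&0&0\end{pmatrix}$. An extremal pair: trajectory $x$ with control $u$ on $[0,T]$, Lipschitz row vector $\lambda(t)\in\mathbb R^3$ with $\lambda(t)\cdot x(t)=0$, $\lambda(t)\ne0$, and constant $\lambda_0\le0$, such that a.e. $\dot\lambda=-\lambda(F+u_1G_1+u_2G_2)$, $u(t)$ maximizes $\lambda Fx+u_1\lambda G_1x+u_2\lambda G_2x+\lambda_0$ over $[-1,1]^2$, and the maximum is $0$. It is abnormal if $\lambda_0=0$. Bang-bang: $u$ is a finite concatenation of arcs on which it is a.e. constant in $\{-1,1\}^2$. *)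

theory Defs
  imports "HOL-Analysis.Analysis"
begin

text \<open>Vectors of R^3 are real^3; components indexed 1,2,3 (in the type 3, index 3 = 0).\<close>

definition vec3 :: "real \<Rightarrow> real \<Rightarrow> real \<Rightarrow> real^3" where
  "vec3 a b c = (\<chi> i. if i = 1 then a else if i = 2 then b else c)"

definition mat3 :: "real^3 \<Rightarrow> real^3 \<Rightarrow> real^3 \<Rightarrow> real^3^3" where
  "mat3 r1 r2 r3 = (\<chi> i. if i = 1 then r1 else if i = 2 then r2 else r3)"

definition Fm :: "real \<Rightarrow> real^3^3" where
  "Fm \<alpha> = cos \<alpha> *\<^sub>R mat3 (vec3 0 (-1) 0) (vec3 1 0 0) (vec3 0 0 0)"

definition G1m :: "real \<Rightarrow> real \<Rightarrow> real^3^3" where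
  "G1m \<alpha> \<beta> = (sin \<alpha> * sin \<beta>) *\<^sub>R mat3 (vec3 0 0 0) (vec3 0 0 (-1)) (vec3 0 1 0)"

definition G2m :: "real \<Rightarrow> real \<Rightarrow> real^3^3" where
  "G2m \<alpha> \<beta> = (sin \<alpha> * cos \<beta>) *\<^sub>R mat3 (vec3 0 0 (-1)) (vec3 0 0 0) (vec3 1 0 0)"

definition Am :: "real \<Rightarrow> real \<Rightarrow> real \<Rightarrow> real \<Rightarrow> real^3^3" where
  "Am \<alpha> \<beta> v1 v2 = Fm \<alpha> + v1 *\<^sub>R G1m \<alpha> \<beta> + v2 *\<^sub>R G2m \<alpha> \<beta>"

definition Ham :: "real \<Rightarrow> real \<Rightarrow> real^3 \<Rightarrow> real^3 \<Rightarrow> real \<Rightarrow> real \<Rightarrow> real \<Rightarrow> real" where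
  "Ham \<alpha> \<beta> l x l0 v1 v2 = l \<bullet> (Fm \<alpha> *v x) + v1 * (l \<bullet> (G1m \<alpha> \<beta> *v x))
      + v2 * (l \<bullet> (G2m \<alpha> \<beta> *v x)) + l0"

text \<open>Admissible trajectory on [0,T]: measurable controls with |u_i| \<le> 1, x on the unit sphere,
  and x a Caratheodory (absolutely continuous) solution of the ODE, expressed in integral form.\<close>
definition admissible :: "real \<Rightarrow> real \<Rightarrow> real \<Rightarrow> (real \<Rightarrow> real^3) \<Rightarrow> (real \<Rightarrow> real) \<Rightarrow> (real \<Rightarrow> real) \<Rightarrow> bool" where
  "admissible \<alpha> \<beta> T x u1 u2 \<longleftrightarrow>
     0 < T \<and>
     u1 \<in> borel_measurable (lebesgue_on {0..T}) \<and> u2 \<in> borel_measurable (lebesgue_on {0..T}) \<and>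
     (\<forall>t\<in>{0..T}. \<bar>u1 t\<bar> \<le> 1 \<and> \<bar>u2 t\<bar> \<le> 1) \<and>
     (\<forall>t\<in>{0..T}. norm (x t) = 1) \<and>
     (\<forall>t\<in>{0..T}. ((\<lambda>s. Am \<alpha> \<beta> (u1 s) (u2 s) *v x s) has_integral (x t - x 0)) {0..t})"

definition extremal :: "real \<Rightarrow> real \<Rightarrow> real \<Rightarrow> (real \<Rightarrow> real^3) \<Rightarrow> (real \<Rightarrow> real) \<Rightarrow> (real \<Rightarrow> real)
    \<Rightarrow> (real \<Rightarrow> real^3) \<Rightarrow> real \<Rightarrow> bool" where
  "extremal \<alpha> \<beta> T x u1 u2 l l0 \<longleftrightarrow>
     admissible \<alpha> \<beta> T x u1 u2 \<and>
     (\<exists>L. L-lipschitz_on {0..T} l) \<and>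
     (\<forall>t\<in>{0..T}. l t \<bullet> x t = 0 \<and> l t \<noteq> 0) \<and>
     l0 \<le> 0 \<and>
     (AE t in lebesgue_on {0..T}.
        (l has_vector_derivative (- (l t v* Am \<alpha> \<beta> (u1 t) (u2 t)))) (at t) \<and>
        (\<forall>v1\<in>{-1..1}. \<forall>v2\<in>{-1..1}.
            Ham \<alpha> \<beta> (l t) (x t) l0 v1 v2 \<le> Ham \<alpha> \<beta> (l t) (x t) l0 (u1 t) (u2 t)) \<and>
        Ham \<alpha> \<beta> (l t) (x t) l0 (u1 t) (u2 t) = 0)"

definition abnormal_extremal :: "real \<Rightarrow> real \<Rightarrow> real \<Rightarrow> (real \<Rightarrow> real^3) \<Rightarrow> (real \<Rightarrow> real) \<Rightarrow> (real \<Rightarrow> real)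
    \<Rightarrow> (real \<Rightarrow> real^3) \<Rightarrow> real \<Rightarrow> bool" where
  "abnormal_extremal \<alpha> \<beta> T x u1 u2 l l0 \<longleftrightarrow> extremal \<alpha> \<beta> T x u1 u2 l l0 \<and> l0 = 0"

definition bang_bang :: "real \<Rightarrow> (real \<Rightarrow> real) \<Rightarrow> (real \<Rightarrow> real) \<Rightarrow> bool" where
  "bang_bang T u1 u2 \<longleftrightarrow>
     (\<exists>k::nat. \<exists>\<tau>::nat \<Rightarrow> real. \<exists>c1 c2 :: nat \<Rightarrow> real.
        1 \<le> k \<and> \<tau> 0 = 0 \<and> \<tau> k = T \<and> (\<forall>i<k. \<tau> i < \<tau> (Suc i)) \<and>
        (\<forall>i<k. c1 i \<in> {-1, 1} \<and> c2 i \<in> {-1, 1} \<and>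
           (AE t in lebesgue. t \<in> {\<tau> i..\<tau> (Suc i)} \<longrightarrow> u1 t = c1 i \<and> u2 t = c2 i)))"

definition northpole :: "real^3" where "northpole = vec3 0 0 1"

end

theory Submission imports Defs begin

text \<open>Pontryagin's maximum condition forces the maximized Hamiltonian
  \<open>\<lambda>Fx + |\<lambda>G\<^sub>1x| + |\<lambda>G\<^sub>2x| + \<lambda>\<^sub>0\<close> to vanish almost everywhere along an extremal;
  as it is continuous in time, it vanishes at \<open>t = 0\<close> as well. At the north pole
  \<open>FN = 0\<close> while \<open>\<lambda>G\<^sub>1N = -sin \<alpha> sin \<beta> \<lambda>\<^sub>2\<close> and \<open>\<lambda>G\<^sub>2N = -sin \<alpha> cos \<beta> \<lambda>\<^sub>1\<close>, so for an abnormal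
  extremal (\<open>\<lambda>\<^sub>0 = 0\<close>) starting there \<open>\<lambda>\<^sub>1 = \<lambda>\<^sub>2 = 0\<close>; together with \<open>\<lambda> \<bottom> N\<close> this gives
  \<open>\<lambda>(0) = 0\<close>, which is excluded.\<close>

lemma vec3_nth [simp]: "vec3 a b c $ 1 = a" "vec3 a b c $ 2 = b" "vec3 a b c $ 3 = c"
  by (simp_all add: vec3_def)

lemma mat3_nth [simp]: "mat3 r1 r2 r3 $ 1 = r1" "mat3 r1 r2 r3 $ 2 = r2" "mat3 r1 r2 r3 $ 3 = r3"
  by (simp_all add: mat3_def)

lemma inner_real3: "(v::real^3) \<bullet> w = v$1 * w$1 + v$2 * w$2 + v$3 * w$3"
  by (simp add: inner_vec_def sum_3)

lemma matrix_vector_mult_real3_nth: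
  "((A::real^3^3) *v x) $ i = A$i$1 * x$1 + A$i$2 * x$2 + A$i$3 * x$3"
  by (simp add: matrix_vector_mult_def sum_3)

lemma continuous_on_nonpos_if_AE_nonpos:
  fixes f :: "real \<Rightarrow> real"
  assumes "a < b" and f: "continuous_on {a..b} f"
    and ae: "AE t in lebesgue_on {a..b}. f t \<le> 0" and t0: "t0 \<in> {a..b}"
  shows "f t0 \<le> 0"
proof (rule ccontr)
  assume "\<not> f t0 \<le> 0"
  then obtain d where "d > 0" and d: "\<forall>t\<in>{a..b}. dist t t0 < d \<longrightarrow> dist (f t) (f t0) < f t0"
    using f t0 unfolding continuous_on_iff by (meson not_le)
  define c e where "c = max a (t0 - d/2)" and "e = min b (t0 + d/2)"
  have ce: "c < e" "{c..e} \<subseteq> {a..b}"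
    using \<open>a < b\<close> \<open>d > 0\<close> t0 by (auto simp: c_def e_def)
  have "{c..e} \<subseteq> {t \<in> space (lebesgue_on {a..b}). \<not> f t \<le> 0}"
  proof
    fix t assume t: "t \<in> {c..e}"
    with ce have "t \<in> {a..b}" "dist t t0 < d"
      using \<open>d > 0\<close> by (auto simp: c_def e_def dist_real_def)
    with d have "f t > 0" by (force simp: dist_real_def)
    with \<open>t \<in> {a..b}\<close> show "t \<in> {t \<in> space (lebesgue_on {a..b}). \<not> f t \<le> 0}" by simp
  qed
  moreover obtain N where "{t \<in> space (lebesgue_on {a..b}). \<not> f t \<le> 0} \<subseteq> N"
    "N \<in> sets (lebesgue_on {a..b})" "emeasure (lebesgue_on {a..b}) N = 0"
    using AE_E[OF ae] by blast
  moreover have "{c..e} \<in> sets (lebesgue_on {a..b})"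
    using ce by (simp add: sets_restrict_space_iff)
  ultimately have "emeasure (lebesgue_on {a..b}) {c..e} = 0"
    by (metis emeasure_eq_0 subset_trans)
  moreover have "emeasure (lebesgue_on {a..b}) {c..e} = ennreal (e - c)"
    using ce by (simp add: emeasure_restrict_space)
  ultimately show False using ce by simp
qed

lemma admissible_continuous_on:
  assumes "admissible \<alpha> \<beta> T x u1 u2"
  shows "continuous_on {0..T} x"
proof -
  define f where "f = (\<lambda>s. Am \<alpha> \<beta> (u1 s) (u2 s) *v x s)"
  have int: "\<forall>t\<in>{0..T}. (f has_integral (x t - x 0)) {0..t}" and "0 < T"
    using assms unfolding admissible_def f_def by auto
  then have "f integrable_on {0..T}" by auto
  then have "continuous_on {0..T} (\<lambda>t. x 0 + integral {0..t} f)"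
    by (intro continuous_intros indefinite_integral_continuous_1)
  moreover have "x 0 + integral {0..t} f = x t" if "t \<in> {0..T}" for t
    using int that integral_unique by (metis add.commute diff_add_cancel)
  ultimately show ?thesis by (rule continuous_on_eq)
qed

text \<open>The maximum of \<^const>\<open>Ham\<close> over the control square, without the term \<open>\<lambda>\<^sub>0\<close>.\<close>
definition Ham_max :: "real \<Rightarrow> real \<Rightarrow> real^3 \<Rightarrow> real^3 \<Rightarrow> real" where
  "Ham_max \<alpha> \<beta> l x =
     l \<bullet> (Fm \<alpha> *v x) + \<bar>l \<bullet> (G1m \<alpha> \<beta> *v x)\<bar> + \<bar>l \<bullet> (G2m \<alpha> \<beta> *v x)\<bar>"

lemma Ham_max_le_if_maximal:
  assumes "\<forall>v1\<in>{-1..1}. \<forall>v2\<in>{-1..1}. Ham \<alpha> \<beta> l x l0 v1 v2 \<le> Ham \<alpha> \<beta> l x l0 w1 w2"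
  shows "Ham_max \<alpha> \<beta> l x + l0 \<le> Ham \<alpha> \<beta> l x l0 w1 w2"
proof -
  let ?v1 = "sgn (l \<bullet> (G1m \<alpha> \<beta> *v x))" and ?v2 = "sgn (l \<bullet> (G2m \<alpha> \<beta> *v x))"
  have "sgn a * a = \<bar>a\<bar>" for a :: real by (simp add: sgn_if)
  then have "Ham \<alpha> \<beta> l x l0 ?v1 ?v2 = Ham_max \<alpha> \<beta> l x + l0"
    by (simp add: Ham_def Ham_max_def)
  moreover have "?v1 \<in> {-1..1}" "?v2 \<in> {-1..1}" by (auto simp: sgn_if)
  ultimately show ?thesis using assms by metis
qed

lemma continuous_on_Ham_max:
  assumes "continuous_on S l" "continuous_on S x"
  shows "continuous_on S (\<lambda>t. Ham_max \<alpha> \<beta> (l t) (x t))"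
proof -
  have "continuous_on S (\<lambda>t. A *v x t)" for A :: "real^3^3"
    by (rule continuous_on_compose2[OF matrix_vector_mult_linear_continuous_on[of UNIV A] assms(2)])
      simp
  then show ?thesis unfolding Ham_max_def
    by (intro continuous_intros assms(1))
qed

lemma extremal_Ham_max_nonpos:
  assumes "extremal \<alpha> \<beta> T x u1 u2 l l0" "t \<in> {0..T}"
  shows "Ham_max \<alpha> \<beta> (l t) (x t) + l0 \<le> 0"
proof -
  have adm: "admissible \<alpha> \<beta> T x u1 u2" and "\<exists>L. L-lipschitz_on {0..T} l"
    using assms(1) by (auto simp: extremal_def)
  then have "continuous_on {0..T} l" "continuous_on {0..T} x"
    by (auto intro: lipschitz_on_continuous_on admissible_continuous_on)
  then have "continuous_on {0..T} (\<lambda>t. Ham_max \<alpha> \<beta> (l t) (x t) + l0)"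
    by (intro continuous_intros continuous_on_Ham_max)
  moreover have "AE t in lebesgue_on {0..T}. Ham_max \<alpha> \<beta> (l t) (x t) + l0 \<le> 0"
    using assms(1) unfolding extremal_def
    by (elim conjE eventually_mono) (metis Ham_max_le_if_maximal)
  moreover have "0 < T" using adm by (simp add: admissible_def)
  ultimately show ?thesis
    using continuous_on_nonpos_if_AE_nonpos[of 0 T] assms(2) by blast
qed

lemma Ham_max_northpole_pos:
  assumes "0 < \<alpha>" "\<alpha> < pi/2" "0 < \<beta>" "\<beta> < pi/2"
    and "l \<bullet> northpole = 0" "l \<noteq> 0"
  shows "0 < Ham_max \<alpha> \<beta> l northpole"
proof -
  have "0 < sin \<alpha>" "0 < sin \<beta>" "0 < cos \<beta>"
    using assms(1-4) by (auto intro: sin_gt_zero cos_gt_zero_pi)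
  then have s: "0 < sin \<alpha> * sin \<beta>" "0 < sin \<alpha> * cos \<beta>"
    and abs: "\<bar>sin \<alpha>\<bar> = sin \<alpha>" "\<bar>sin \<beta>\<bar> = sin \<beta>" "\<bar>cos \<beta>\<bar> = cos \<beta>" by simp_all
  have "l$3 = 0" using assms(5) by (simp add: inner_real3 northpole_def)
  with assms(6) have "l$1 \<noteq> 0 \<or> l$2 \<noteq> 0" by (auto simp: vec_eq_iff forall_3)
  moreover have "Ham_max \<alpha> \<beta> l northpole
      = sin \<alpha> * sin \<beta> * \<bar>l$2\<bar> + sin \<alpha> * cos \<beta> * \<bar>l$1\<bar>"
    by (simp add: abs Ham_max_def inner_real3 matrix_vector_mult_real3_nth
        Fm_def G1m_def G2m_def northpole_def abs_mult)
  ultimately show ?thesis using s by (auto intro: add_pos_nonneg add_nonneg_pos)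
qed

theorem proposition3:
  fixes \<alpha> \<beta> T :: real and x :: "real \<Rightarrow> real^3" and u1 u2 :: "real \<Rightarrow> real"
    and l :: "real \<Rightarrow> real^3" and l0 :: real
  assumes "0 < \<alpha>" "\<alpha> < pi/2" "0 < \<beta>" "\<beta> < pi/2"
  shows "\<not> (abnormal_extremal \<alpha> \<beta> T x u1 u2 l l0 \<and> x 0 = northpole \<and> bang_bang T u1 u2)"
proof
  assume "abnormal_extremal \<alpha> \<beta> T x u1 u2 l l0 \<and> x 0 = northpole \<and> bang_bang T u1 u2"
  then have ex: "extremal \<alpha> \<beta> T x u1 u2 l 0" and x0: "x 0 = northpole"
    by (auto simp: abnormal_extremal_def)
  then have "0 \<in> {0..T}" by (simp add: extremal_def admissible_def)
  then have "Ham_max \<alpha> \<beta> (l 0) northpole \<le> 0"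
    using extremal_Ham_max_nonpos[OF ex] x0 by fastforce
  moreover have "l 0 \<bullet> x 0 = 0" "l 0 \<noteq> 0"
    using ex \<open>0 \<in> {0..T}\<close> unfolding extremal_def by blast+
  ultimately show False
    using Ham_max_northpole_pos[OF assms] x0 by fastforce
qed

end
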